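(* Let $X,Y$ be compact metric spaces with metrics $d,d'$, and let $f\colon X\to X$, $g\colon Y\to Y$ be continuous maps. Let $C\in\mathcal{C}(f)$, $D\in\mathcal{D}(C)$, $C'\in\mathcal{C}(g)$, and let $h\colon C\to C'$ be a homeomorphism with $h\circ f|_C=g|_{C'}\circ h$ (then $h(D)\in\mathcal{D}(C')$). Let $\mathcal{F},\mathcal{G}$ be full Furstenberg families, $n\ge2$ and $\delta>0$. If $g$ has the limit shadowing property and there is an $(\mathcal{F},\mathcal{G})$-$\delta$-scrambled $n$-tuple $(a_1,\dots,a_n)\in[V^s(D)]^n$ for $f$, then there are $\delta'>0$ and an $(\mathcal{F},\mathcal{G})$-$\delta'$-scrambled $n$-tuple $(b_1,\dots,b_n)\in[V^s(h(D))]^n$ for $g$.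
   Context: The following is defined for any continuous self-map $f$ of a compact metric space $(X,d)$ (and analogously for $g$ on $(Y,d')$). A $\delta$-chain of $f$ ($\delta>0$) is a finite sequence $(x_i)_{i=0}^k$, $k\ge1$, with $d(f(x_i),x_{i+1})\le\delta$ for $0\le i\le k-1$; it is a $\delta$-cycle if $x_0=x_k$, with length $k$. Write $x\to y$ if for every $\delta>0$ there is a $\delta$-chain from $x$ to $y$. Let $CR(f)=\{x\colon x\to x\}$; on $CR(f)$ let $x\leftrightarrow y$ iff $x\to y$ and $y\to x$; its classes are the chain components, forming $\mathcal{C}(f)$. For $C\in\mathcal{C}(f)$, $\delta>0$, let $m=m(C,\delta)$ be the gcd of the lengths of all $\delta$-cycles of $f|_C$, and for $x,y\in C$ let $x\sim_{C,\delta}y$ iff there is a $\delta$-chain of $f|_C$ from $x$ to $y$ of length divisible by $m$; $\mathcal{D}(C,\delta)$ is the set of its equivalence classes. Let $x\sim_C y$ iff $x\sim_{C,\delta}y$ for all $\delta>0$; $\mathcal{D}(C)$ is its set of classes. For $D\in\mathcal{D}(C)$, $D_\delta$ is the element of $\mathcal{D}(C,\delta)$ containing $D$. $W^s(C)=\{x\colon\lim_i d(f^i(x),C)=0\}$ and $V^s(D)=\bigcap_{\delta>0}\{x\in W^s(C)\colon\lim_i d(f^i(x),f^i(D_\delta))=0\}$. $g$ has the limit shadowing property if for every sequence $(y_i)_{i\ge0}$ in $Y$ with $\lim_i d'(g(y_i),y_{i+1})=0$ there is $y\in Y$ with $\lim_i d'(g^i(y),y_i)=0$. A Furstenberg family is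 a nonempty proper family $\mathcal{F}\subsetneq 2^{\mathbb{N}_0}$ closed under taking supersets; it is full if $\{i\in A\colon i\ge n\}\in\mathcal{F}$ for all $A\in\mathcal{F}$, $n\ge0$. For $x_1,\dots,x_n\in X$, $r>0$: $S_f(x_1,\dots,x_n;r)=\{i\in\mathbb{N}_0\colon\min_{j<k}d(f^i(x_j),f^i(x_k))>r\}$ and $T_f(x_1,\dots,x_n;r)=\{i\in\mathbb{N}_0\colon\max_{j<k}d(f^i(x_j),f^i(x_k))<r\}$. $(x_1,\dots,x_n)$ is $(\mathcal{F},\mathcal{G})$-$\delta$-scrambled for $f$ if $S_f(x_1,\dots,x_n;\delta)\in\mathcal{F}$ and $T_f(x_1,\dots,x_n;\epsilon)\in\mathcal{G}$ for all $\epsilon>0$ (analogously for $g$ with $d'$). *)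

theory Defs
  imports "HOL-Analysis.Analysis"
begin

text \<open>All notions are relativised to a carrier set S of a metric space type.\<close>

definition dchain :: "'a::metric_space set \<Rightarrow> ('a \<Rightarrow> 'a) \<Rightarrow> real \<Rightarrow> (nat \<Rightarrow> 'a) \<Rightarrow> nat \<Rightarrow> bool" where
  "dchain S f \<delta> x k \<longleftrightarrow> k \<ge> 1 \<and> (\<forall>i\<le>k. x i \<in> S) \<and> (\<forall>i<k. dist (f (x i)) (x (Suc i)) \<le> \<delta>)"

definition chain_to :: "'a::metric_space set \<Rightarrow> ('a \<Rightarrow> 'a) \<Rightarrow> 'a \<Rightarrow> 'a \<Rightarrow> bool" where
  "chain_to S f x y \<longleftrightarrow> (\<forall>\<delta>>0. \<exists>c k. dchain S f \<delta> c k \<and> c 0 = x \<and> c k = y)"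

definition CR :: "'a::metric_space set \<Rightarrow> ('a \<Rightarrow> 'a) \<Rightarrow> 'a set" where
  "CR S f = {x \<in> S. chain_to S f x x}"

definition chain_components :: "'a::metric_space set \<Rightarrow> ('a \<Rightarrow> 'a) \<Rightarrow> 'a set set" where
  "chain_components S f =
     {{y \<in> CR S f. chain_to S f x y \<and> chain_to S f y x} | x. x \<in> CR S f}"

definition cyc_gcd :: "'a::metric_space set \<Rightarrow> ('a \<Rightarrow> 'a) \<Rightarrow> real \<Rightarrow> nat" where
  "cyc_gcd C f \<delta> = Gcd {k. \<exists>c. dchain C f \<delta> c k \<and> c 0 = c k}"

definition sim_delta :: "'a::metric_space set \<Rightarrow> ('a \<Rightarrow> 'a) \<Rightarrow> real \<Rightarrow> 'a \<Rightarrow> 'a \<Rightarrow> bool" where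
  "sim_delta C f \<delta> x y \<longleftrightarrow>
     (\<exists>c k. dchain C f \<delta> c k \<and> c 0 = x \<and> c k = y \<and> cyc_gcd C f \<delta> dvd k)"

definition Dcl_delta :: "'a::metric_space set \<Rightarrow> ('a \<Rightarrow> 'a) \<Rightarrow> real \<Rightarrow> 'a set set" where
  "Dcl_delta C f \<delta> = {{y \<in> C. sim_delta C f \<delta> x y} | x. x \<in> C}"

definition sim_C :: "'a::metric_space set \<Rightarrow> ('a \<Rightarrow> 'a) \<Rightarrow> 'a \<Rightarrow> 'a \<Rightarrow> bool" where
  "sim_C C f x y \<longleftrightarrow> (\<forall>\<delta>>0. sim_delta C f \<delta> x y)"

definition Dcl :: "'a::metric_space set \<Rightarrow> ('a \<Rightarrow> 'a) \<Rightarrow> 'a set set" where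
  "Dcl C f = {{y \<in> C. sim_C C f x y} | x. x \<in> C}"

definition D_delta :: "'a::metric_space set \<Rightarrow> ('a \<Rightarrow> 'a) \<Rightarrow> real \<Rightarrow> 'a set \<Rightarrow> 'a set" where
  "D_delta C f \<delta> D = (THE E. E \<in> Dcl_delta C f \<delta> \<and> D \<subseteq> E)"

definition Ws :: "'a::metric_space set \<Rightarrow> ('a \<Rightarrow> 'a) \<Rightarrow> 'a set \<Rightarrow> 'a set" where
  "Ws X f C = {x \<in> X. (\<lambda>i. infdist ((f ^^ i) x) C) \<longlonglongrightarrow> 0}"

definition Vs :: "'a::metric_space set \<Rightarrow> ('a \<Rightarrow> 'a) \<Rightarrow> 'a set \<Rightarrow> 'a set \<Rightarrow> 'a set" where
  "Vs X f C D = (\<Inter>\<delta>\<in>{\<delta>. \<delta> > 0}.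
      {x \<in> Ws X f C. (\<lambda>i. infdist ((f ^^ i) x) ((f ^^ i) ` D_delta C f \<delta> D)) \<longlonglongrightarrow> 0})"

definition limit_shadowing :: "'a::metric_space set \<Rightarrow> ('a \<Rightarrow> 'a) \<Rightarrow> bool" where
  "limit_shadowing Y g \<longleftrightarrow>
     (\<forall>y. (\<forall>i. y i \<in> Y) \<and> (\<lambda>i. dist (g (y i)) (y (Suc i))) \<longlonglongrightarrow> 0 \<longrightarrow>
        (\<exists>z\<in>Y. (\<lambda>i. dist ((g ^^ i) z) (y i)) \<longlonglongrightarrow> 0))"

definition furstenberg_family :: "nat set set \<Rightarrow> bool" where
  "furstenberg_family F \<longleftrightarrow> F \<noteq> {} \<and> F \<noteq> UNIV \<and> (\<forall>A\<in>F. \<forall>B. A \<subseteq> B \<longrightarrow> B \<in> F)"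

definition full_family :: "nat set set \<Rightarrow> bool" where
  "full_family F \<longleftrightarrow> furstenberg_family F \<and> (\<forall>A\<in>F. \<forall>n. {i \<in> A. i \<ge> n} \<in> F)"

text \<open>Tuples (x_1,...,x_n) are indexed as x 0, ..., x (n-1).
  min over pairs > r is written as: all pairs > r; similarly max < r.\<close>
definition S_set :: "('a::metric_space \<Rightarrow> 'a) \<Rightarrow> nat \<Rightarrow> (nat \<Rightarrow> 'a) \<Rightarrow> real \<Rightarrow> nat set" where
  "S_set f n x r = {i. \<forall>j k. j < k \<and> k < n \<longrightarrow> dist ((f ^^ i) (x j)) ((f ^^ i) (x k)) > r}"

definition T_set :: "('a::metric_space \<Rightarrow> 'a) \<Rightarrow> nat \<Rightarrow> (nat \<Rightarrow> 'a) \<Rightarrow> real \<Rightarrow> nat set" where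
  "T_set f n x r = {i. \<forall>j k. j < k \<and> k < n \<longrightarrow> dist ((f ^^ i) (x j)) ((f ^^ i) (x k)) < r}"

definition scrambled :: "('a::metric_space \<Rightarrow> 'a) \<Rightarrow> nat set set \<Rightarrow> nat set set \<Rightarrow> real \<Rightarrow> nat \<Rightarrow> (nat \<Rightarrow> 'a) \<Rightarrow> bool" where
  "scrambled f F G \<delta> n x \<longleftrightarrow> S_set f n x \<delta> \<in> F \<and> (\<forall>\<epsilon>>0. T_set f n x \<epsilon> \<in> G)"

end

theory Submission
  imports Defs
begin

(* Chain components of a compact system are closed, invariant and chain transitive. Hence a
   uniformly continuous conjugacy h maps fine chains of f in C to chains of g in C', and so maps
   each class D_eta (eta small) into the class of h(D) at a prescribed scale. A point of V^s(D) is
   asymptotic to a sequence c in C, which is then an asymptotic pseudo-orbit; h o c is an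
   asymptotic pseudo-orbit of g, and limit shadowing provides b whose orbit is asymptotic to
   h o c, which forces b into V^s(h(D)). Since h is uniformly bicontinuous on the compact set C,
   eventually uniform separation and proximity of the orbits of the a_j pass to the orbits of
   the b_j (with a new separation constant), and fullness of the families absorbs the finitely
   many exceptional times. *)

section \<open>Chains\<close>

definition chain_reach :: "'a::metric_space set \<Rightarrow> ('a \<Rightarrow> 'a) \<Rightarrow> real \<Rightarrow> 'a \<Rightarrow> 'a \<Rightarrow> bool" where
  "chain_reach S f \<delta> x y \<longleftrightarrow> (\<exists>c k. dchain S f \<delta> c k \<and> c 0 = x \<and> c k = y)"

lemma chain_to_iff_chain_reach: "chain_to S f x y \<longleftrightarrow> (\<forall>\<delta>>0. chain_reach S f \<delta> x y)"
  by (simp add: chain_to_def chain_reach_def)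

lemma dchain_mono: "dchain S f \<delta> c k \<Longrightarrow> \<delta> \<le> \<delta>' \<Longrightarrow> dchain S f \<delta>' c k"
  unfolding dchain_def by force

lemma chain_reach_mono: "chain_reach S f \<delta> x y \<Longrightarrow> \<delta> \<le> \<delta>' \<Longrightarrow> chain_reach S f \<delta>' x y"
  unfolding chain_reach_def using dchain_mono by blast

lemma dchain_append:
  assumes "dchain S f \<delta> c k" "dchain S f \<delta> d l" "c k = d 0"
  shows "\<exists>e. dchain S f \<delta> e (k + l) \<and> e 0 = c 0 \<and> e (k + l) = d l"
proof -
  define e where "e i = (if i \<le> k then c i else d (i - k))" for i
  have "dchain S f \<delta> e (k + l)"
    unfolding dchain_def
  proof (intro conjI allI impI)
    show "1 \<le> k + l" using assms(1) unfolding dchain_def by auto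
    show "e i \<in> S" if "i \<le> k + l" for i using assms(1,2) that unfolding dchain_def e_def by auto
  next
    fix i assume i: "i < k + l"
    consider "i < k" | "i = k" | "i > k" by linarith
    then show "dist (f (e i)) (e (Suc i)) \<le> \<delta>"
    proof cases
      case 1 then show ?thesis using assms(1) unfolding dchain_def e_def by auto
    next
      case 2 then show ?thesis using assms unfolding dchain_def e_def by auto
    next
      case 3
      then have "Suc i - k = Suc (i - k)" "i - k < l" using i by auto
      then show ?thesis using 3 assms(2) unfolding dchain_def e_def by auto
    qed
  qed
  moreover have "e 0 = c 0" "e (k + l) = d l" using assms(2) unfolding dchain_def e_def by auto
  ultimately show ?thesis by blast
qed

lemma chain_reach_trans:
  assumes "chain_reach S f \<delta> x y" "chain_reach S f \<delta> y z"
  shows "chain_reach S f \<delta> x z"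
proof -
  obtain c k d l where c: "dchain S f \<delta> c k" "c 0 = x" "c k = y"
    and d: "dchain S f \<delta> d l" "d 0 = y" "d l = z"
    using assms unfolding chain_reach_def by blast
  have "c k = d 0" using c(3) d(2) by simp
  then show ?thesis using dchain_append[OF c(1) d(1)] c(2) d(3) unfolding chain_reach_def by auto
qed

lemma chain_to_trans: "chain_to S f x y \<Longrightarrow> chain_to S f y z \<Longrightarrow> chain_to S f x z"
  unfolding chain_to_iff_chain_reach using chain_reach_trans by blast

lemma dchain_prefix: "dchain S f \<delta> c k \<Longrightarrow> 1 \<le> i \<Longrightarrow> i \<le> k \<Longrightarrow> dchain S f \<delta> c i"
  unfolding dchain_def by auto

lemma dchain_suffix: "dchain S f \<delta> c k \<Longrightarrow> i < k \<Longrightarrow> dchain S f \<delta> (\<lambda>j. c (i + j)) (k - i)"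
  unfolding dchain_def by auto

lemma dchain_point_chain_reach:
  assumes "dchain S f \<delta> c k" "c 0 = x" "c k = y" "chain_reach S f \<delta> y x" "1 \<le> i" "i \<le> k"
  shows "chain_reach S f \<delta> x (c i)" "chain_reach S f \<delta> (c i) x"
proof -
  show "chain_reach S f \<delta> x (c i)"
    using dchain_prefix[OF assms(1,5,6)] assms(2) unfolding chain_reach_def by blast
  show "chain_reach S f \<delta> (c i) x"
  proof (cases "i = k")
    case False
    then have "chain_reach S f \<delta> (c i) y"
      using assms dchain_suffix[OF assms(1), of i] unfolding chain_reach_def
      by (intro exI[of _ "\<lambda>j. c (i + j)"] exI[of _ "k - i"]) auto
    then show ?thesis using assms(4) chain_reach_trans by blast
  next
    case True
    then show ?thesis using assms(3,4) by simp
  qed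
qed

lemma dchain_perturb:
  assumes "dchain S f \<rho> c k" "\<forall>i\<le>k. p i \<in> T"
    and "\<forall>i<k. dist (f (p i)) (f (c i)) \<le> \<eta>" "\<forall>i<k. dist (c (Suc i)) (p (Suc i)) \<le> \<epsilon>"
  shows "dchain T f (\<eta> + \<rho> + \<epsilon>) p k"
  unfolding dchain_def
proof (intro conjI allI impI)
  show "1 \<le> k" using assms(1) unfolding dchain_def by simp
  show "p i \<in> T" if "i \<le> k" for i using assms(2) that by simp
next
  fix i assume i: "i < k"
  have "dist (f (p i)) (p (Suc i)) \<le> dist (f (p i)) (f (c i)) + dist (f (c i)) (c (Suc i)) + dist (c (Suc i)) (p (Suc i))"
    using dist_triangle[of "f (p i)" "p (Suc i)" "c (Suc i)"] dist_triangle[of "f (p i)" "c (Suc i)" "f (c i)"]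
    by linarith
  moreover have "dist (f (c i)) (c (Suc i)) \<le> \<rho>" using assms(1) i unfolding dchain_def by blast
  ultimately show "dist (f (p i)) (p (Suc i)) \<le> \<eta> + \<rho> + \<epsilon>" using assms(3,4) i by force
qed

lemma chain_to_limit_target:
  assumes "w \<in> S" "\<And>\<delta> \<rho>. \<delta> > 0 \<Longrightarrow> \<rho> > 0 \<Longrightarrow> \<exists>v. chain_reach S f \<delta> x v \<and> dist v w < \<rho>"
  shows "chain_to S f x w"
  unfolding chain_to_iff_chain_reach
proof (intro allI impI)
  fix \<delta> :: real assume "\<delta> > 0"
  then obtain v c k where v: "dist v w < \<delta>/2" and c: "dchain S f (\<delta>/2) c k" "c 0 = x" "c k = v"
    using assms(2)[of "\<delta>/2" "\<delta>/2"] unfolding chain_reach_def by auto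
  have "dchain S f (0 + \<delta>/2 + \<delta>/2) (c(k := w)) k"
    by (rule dchain_perturb[OF c(1)]) (use c v assms(1) \<open>\<delta> > 0\<close> in \<open>auto simp: dchain_def\<close>)
  moreover have "k \<noteq> 0" using c unfolding dchain_def by auto
  ultimately show "chain_reach S f \<delta> x w" unfolding chain_reach_def using c
    by (intro exI[of _ "c(k := w)"] exI[of _ k]) auto
qed

lemma chain_to_limit_source:
  assumes "continuous_on S f" "w \<in> S"
    and "\<And>\<delta> \<rho>. \<delta> > 0 \<Longrightarrow> \<rho> > 0 \<Longrightarrow> \<exists>v\<in>S. chain_reach S f \<delta> v x \<and> dist v w < \<rho>"
  shows "chain_to S f w x"
  unfolding chain_to_iff_chain_reach
proof (intro allI impI)
  fix \<delta> :: real assume "\<delta> > 0"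
  then obtain \<rho> where "\<rho> > 0" and \<rho>: "\<forall>v\<in>S. dist v w < \<rho> \<longrightarrow> dist (f v) (f w) < \<delta>/2"
    using assms(1,2) unfolding continuous_on_iff by (meson half_gt_zero)
  then obtain v c k where v: "v \<in> S" "dist v w < \<rho>"
    and c: "dchain S f (\<delta>/2) c k" "c 0 = v" "c k = x"
    using assms(3)[of "\<delta>/2" \<rho>] \<open>\<delta> > 0\<close> unfolding chain_reach_def by auto
  have "dist (f w) (f v) \<le> \<delta>/2" using \<rho> v by (simp add: dist_commute less_imp_le)
  have "dchain S f (\<delta>/2 + \<delta>/2 + 0) (c(0 := w)) k"
    by (rule dchain_perturb[OF c(1)])
      (use c assms(2) \<open>\<delta> > 0\<close> \<open>dist (f w) (f v) \<le> \<delta>/2\<close> in \<open>auto simp: dchain_def\<close>)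
  moreover have "k \<noteq> 0" using c unfolding dchain_def by auto
  ultimately show "chain_reach S f \<delta> w x" unfolding chain_reach_def using c
    by (intro exI[of _ "c(0 := w)"] exI[of _ k]) auto
qed

section \<open>Chain components\<close>

lemma chain_componentsE:
  assumes "C \<in> chain_components S f"
  obtains x where "x \<in> CR S f" "C = {y \<in> CR S f. chain_to S f x y \<and> chain_to S f y x}"
  using assms unfolding chain_components_def by blast

lemma chain_component_subset: "C \<in> chain_components S f \<Longrightarrow> C \<subseteq> S"
  by (elim chain_componentsE) (auto simp: CR_def)

lemma chain_component_nonempty: "C \<in> chain_components S f \<Longrightarrow> C \<noteq> {}"
  by (elim chain_componentsE) (auto simp: CR_def)

lemma chain_component_chain_to:
  "C \<in> chain_components S f \<Longrightarrow> u \<in> C \<Longrightarrow> v \<in> C \<Longrightarrow> chain_to S f u v"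
  by (elim chain_componentsE) (blast intro: chain_to_trans)

lemma chain_component_maximal:
  assumes "C \<in> chain_components S f" "w \<in> S" "u \<in> C" "chain_to S f u w" "chain_to S f w u"
  shows "w \<in> C"
proof -
  obtain x where x: "x \<in> CR S f" "C = {y \<in> CR S f. chain_to S f x y \<and> chain_to S f y x}"
    using assms(1) by (rule chain_componentsE)
  have "chain_to S f w w" "chain_to S f x w" "chain_to S f w x"
    using assms x chain_to_trans by blast+
  then show ?thesis using x assms(2) unfolding CR_def by auto
qed

lemma chain_component_approx_memI:
  assumes "continuous_on S f" "C \<in> chain_components S f" "x \<in> C" "l \<in> S"
    and "\<And>\<delta> \<rho>. \<delta> > 0 \<Longrightarrow> \<rho> > 0 \<Longrightarrow>
      \<exists>w\<in>S. chain_reach S f \<delta> x w \<and> chain_reach S f \<delta> w x \<and> dist w l < \<rho>"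
  shows "l \<in> C"
proof -
  have "chain_to S f x l"
    using assms(5) by (intro chain_to_limit_target[OF assms(4)]) blast
  moreover have "chain_to S f l x"
    using assms(5) by (intro chain_to_limit_source[OF assms(1,4)]) blast
  ultimately show ?thesis using chain_component_maximal[OF assms(2,4,3)] by blast
qed

lemma closed_chain_component:
  assumes "closed S" "continuous_on S f" "C \<in> chain_components S f"
  shows "closed C"
proof -
  obtain u where u: "u \<in> C" using chain_component_nonempty[OF assms(3)] by blast
  have "w \<in> C" if w: "w \<in> closure C" for w
  proof (rule chain_component_approx_memI[OF assms(2,3) u])
    show "w \<in> S" using w chain_component_subset[OF assms(3)] assms(1) closure_minimal by blast
    fix \<delta> \<rho> :: real assume "\<delta> > 0" "\<rho> > 0"
    then obtain v where "v \<in> C" "dist v w < \<rho>" using w unfolding closure_approachable by blast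
    then show "\<exists>v\<in>S. chain_reach S f \<delta> u v \<and> chain_reach S f \<delta> v u \<and> dist v w < \<rho>"
      using chain_component_chain_to[OF assms(3)] u chain_component_subset[OF assms(3)] \<open>\<delta> > 0\<close>
      unfolding chain_to_iff_chain_reach by blast
  qed
  then show ?thesis using closure_subset_eq by blast
qed

lemma compact_chain_component:
  assumes "compact S" "continuous_on S f" "C \<in> chain_components S f"
  shows "compact C"
  using compact_Int_closed[OF assms(1) closed_chain_component[OF compact_imp_closed[OF assms(1)] assms(2,3)]]
    chain_component_subset[OF assms(3)] by (simp add: Int_absorb1)

lemma chain_component_invariant:
  assumes "continuous_on S f" "f ` S \<subseteq> S" "C \<in> chain_components S f"
  shows "f ` C \<subseteq> C"
proof
  fix y assume "y \<in> f ` C"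
  then obtain u where u: "u \<in> C" "y = f u" by blast
  have "f u \<in> S" using u assms chain_component_subset by blast
  \<comment> \<open>the second point of a fine cycle through u is close to f u and chain equivalent to u\<close>
  have "f u \<in> C"
  proof (rule chain_component_approx_memI[OF assms(1,3) u(1) \<open>f u \<in> S\<close>])
    fix \<delta> \<rho> :: real assume "\<delta> > 0" "\<rho> > 0"
    define \<delta>' where "\<delta>' = min \<delta> (\<rho>/2)"
    have "\<delta>' > 0" using \<open>\<delta> > 0\<close> \<open>\<rho> > 0\<close> by (simp add: \<delta>'_def)
    then have uu: "chain_reach S f \<delta>' u u"
      using chain_component_chain_to[OF assms(3) u(1) u(1)] unfolding chain_to_iff_chain_reach by blast
    then obtain c k where c: "dchain S f \<delta>' c k" "c 0 = u" "c k = u" unfolding chain_reach_def by blast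
    then have "1 \<le> k" "c 1 \<in> S" "dist (f u) (c 1) \<le> \<delta>'" unfolding dchain_def by auto
    then have "chain_reach S f \<delta> u (c 1)" "chain_reach S f \<delta> (c 1) u" "dist (c 1) (f u) < \<rho>"
      using dchain_point_chain_reach[OF c uu] chain_reach_mono[of S f \<delta>' _ _ \<delta>] \<open>\<rho> > 0\<close>
      by (auto simp: \<delta>'_def dist_commute)
    then show "\<exists>w\<in>S. chain_reach S f \<delta> u w \<and> chain_reach S f \<delta> w u \<and> dist w (f u) < \<rho>"
      using \<open>c 1 \<in> S\<close> by blast
  qed
  then show "y \<in> C" using u(2) by simp
qed

lemma compact_frequently_near:
  fixes W :: "nat \<Rightarrow> 'a::metric_space"
  assumes "compact S" "\<And>m. W m \<in> S"
  obtains l where "l \<in> S" "\<forall>N. \<forall>\<rho>>0. \<exists>m\<ge>N. dist (W m) l < \<rho>"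
proof -
  obtain l r where l: "l \<in> S" "strict_mono r" "(W \<circ> r) \<longlonglongrightarrow> l"
    using compact_imp_seq_compact[OF assms(1)] assms(2) unfolding seq_compact_def by blast
  have "\<exists>m\<ge>N. dist (W m) l < \<rho>" if "\<rho> > 0" for N \<rho>
  proof -
    obtain N0 where "\<forall>i\<ge>N0. dist (W (r i)) l < \<rho>"
      using l(3) \<open>\<rho> > 0\<close> unfolding tendsto_iff eventually_sequentially by (auto simp: o_def)
    then have "dist (W (r (max N N0))) l < \<rho>" by simp
    moreover have "N \<le> r (max N N0)" using seq_suble[OF l(2), of "max N N0"] by linarith
    ultimately show ?thesis by blast
  qed
  then show ?thesis using that l(1) by blast
qed

lemma chain_component_chain_equivalent_near:
  assumes "compact S" "continuous_on S f" "C \<in> chain_components S f" "x \<in> C" "\<epsilon> > 0"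
  obtains \<rho> where "\<rho> > 0"
    "\<And>w. w \<in> S \<Longrightarrow> chain_reach S f \<rho> x w \<Longrightarrow> chain_reach S f \<rho> w x \<Longrightarrow> \<exists>p\<in>C. dist w p < \<epsilon>"
proof (rule ccontr)
  assume "\<not> thesis"
  have "\<exists>w\<in>S. chain_reach S f (1 / Suc m) x w \<and> chain_reach S f (1 / Suc m) w x \<and> (\<forall>p\<in>C. \<epsilon> \<le> dist w p)" for m
  proof (rule ccontr)
    assume "\<not> ?thesis"
    then have "\<exists>p\<in>C. dist w p < \<epsilon>"
      if "w \<in> S" "chain_reach S f (1 / Suc m) x w" "chain_reach S f (1 / Suc m) w x" for w
      using that by (auto simp: not_le)
    then show False using that[of "1 / Suc m"] \<open>\<not> thesis\<close> by simp
  qed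
  then obtain W where W: "\<And>m. W m \<in> S" "\<And>m. chain_reach S f (1 / Suc m) x (W m)"
    "\<And>m. chain_reach S f (1 / Suc m) (W m) x" "\<And>m p. p \<in> C \<Longrightarrow> \<epsilon> \<le> dist (W m) p"
    by metis
  obtain l where l: "l \<in> S" and cluster: "\<forall>N. \<forall>\<rho>>0. \<exists>m\<ge>N. dist (W m) l < \<rho>"
    by (rule compact_frequently_near[OF assms(1) W(1)])
  have "l \<in> C"
  proof (rule chain_component_approx_memI[OF assms(2-4) l])
    fix \<delta> \<rho> :: real assume "\<delta> > 0" "\<rho> > 0"
    obtain N where N: "inverse (Suc N) < \<delta>" using reals_Archimedean[OF \<open>\<delta> > 0\<close>] by blast
    obtain m where m: "m \<ge> N" "dist (W m) l < \<rho>" using cluster \<open>\<rho> > 0\<close> by blast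
    have "1 / Suc m \<le> 1 / Suc N" using m(1) by (simp add: frac_le)
    then have "1 / Suc m \<le> \<delta>" using N by (simp add: inverse_eq_divide)
    then show "\<exists>w\<in>S. chain_reach S f \<delta> x w \<and> chain_reach S f \<delta> w x \<and> dist w l < \<rho>"
      using W(1-3) m(2) chain_reach_mono by blast
  qed
  obtain m where "dist (W m) l < \<epsilon>" using cluster assms(5) by blast
  then show False using W(4)[OF \<open>l \<in> C\<close>, of m] by simp
qed

lemma chain_component_fine_chains_near:
  assumes "compact S" "continuous_on S f" "C \<in> chain_components S f" "x \<in> C" "y \<in> C" "\<epsilon> > 0"
  obtains \<rho> where "\<rho> > 0"
    "\<And>c k i. dchain S f \<rho> c k \<Longrightarrow> c 0 = x \<Longrightarrow> c k = y \<Longrightarrow> i \<le> k \<Longrightarrow> \<exists>q\<in>C. dist (c i) q < \<epsilon>"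
proof -
  obtain \<rho> where "\<rho> > 0" and \<rho>: "\<And>w. w \<in> S \<Longrightarrow> chain_reach S f \<rho> x w \<Longrightarrow> chain_reach S f \<rho> w x \<Longrightarrow>
      \<exists>p\<in>C. dist w p < \<epsilon>"
    using chain_component_chain_equivalent_near[OF assms(1-4,6)] by blast
  have yx: "chain_reach S f \<rho> y x"
    using chain_component_chain_to[OF assms(3,5,4)] \<open>\<rho> > 0\<close> unfolding chain_to_iff_chain_reach by blast
  have "\<exists>q\<in>C. dist (c i) q < \<epsilon>" if c: "dchain S f \<rho> c k" "c 0 = x" "c k = y" and "i \<le> k" for c k i
  proof (cases "i = 0")
    case True
    then show ?thesis using c(2) assms(4,6) by (intro bexI[of _ x]) auto
  next
    case False
    then have "1 \<le> i" by simp
    have "c i \<in> S" using c(1) \<open>i \<le> k\<close> unfolding dchain_def by blast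
    then show ?thesis
      using \<rho> dchain_point_chain_reach[OF c yx \<open>1 \<le> i\<close> \<open>i \<le> k\<close>] by blast
  qed
  then show ?thesis using that \<open>\<rho> > 0\<close> by blast
qed

definition chain_transitive :: "'a::metric_space set \<Rightarrow> ('a \<Rightarrow> 'a) \<Rightarrow> bool" where
  "chain_transitive S f \<longleftrightarrow> (\<forall>\<delta>>0. \<forall>x\<in>S. \<forall>y\<in>S. chain_reach S f \<delta> x y)"

lemma chain_component_chain_transitive:
  assumes "compact S" "continuous_on S f" "C \<in> chain_components S f"
  shows "chain_transitive C f"
  unfolding chain_transitive_def
proof (intro allI impI ballI)
  fix \<delta> :: real and x y assume "\<delta> > 0" "x \<in> C" "y \<in> C"
  have CS: "C \<subseteq> S" using chain_component_subset[OF assms(3)] .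
  have "\<delta>/3 > 0" using \<open>\<delta> > 0\<close> by simp
  then obtain \<epsilon>0 where "\<epsilon>0 > 0" and \<epsilon>0: "\<forall>u\<in>S. \<forall>v\<in>S. dist v u < \<epsilon>0 \<longrightarrow> dist (f v) (f u) < \<delta>/3"
    using compact_uniformly_continuous[OF assms(2,1)] unfolding uniformly_continuous_on_def by blast
  define \<epsilon> where "\<epsilon> = min \<epsilon>0 (\<delta>/3)"
  have "\<epsilon> > 0" using \<open>\<epsilon>0 > 0\<close> \<open>\<delta> > 0\<close> by (simp add: \<epsilon>_def)
  obtain \<rho> where "\<rho> > 0" and near: "\<And>c k i. dchain S f \<rho> c k \<Longrightarrow> c 0 = x \<Longrightarrow> c k = y \<Longrightarrow> i \<le> k \<Longrightarrow>
      \<exists>q\<in>C. dist (c i) q < \<epsilon>"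
    using chain_component_fine_chains_near[OF assms \<open>x \<in> C\<close> \<open>y \<in> C\<close> \<open>\<epsilon> > 0\<close>] by blast
  define \<rho>' where "\<rho>' = min \<rho> (\<delta>/3)"
  have "\<rho>' > 0" using \<open>\<rho> > 0\<close> \<open>\<delta> > 0\<close> by (simp add: \<rho>'_def)
  then obtain c k where c: "dchain S f \<rho>' c k" "c 0 = x" "c k = y"
    using chain_component_chain_to[OF assms(3) \<open>x \<in> C\<close> \<open>y \<in> C\<close>] unfolding chain_to_def by blast
  have c_\<rho>: "dchain S f \<rho> c k" using dchain_mono[OF c(1)] by (simp add: \<rho>'_def)
  \<comment> \<open>move the points of a fine chain from x to y into C; the endpoints already lie in C\<close>
  define p where "p i = (if c i \<in> C then c i else SOME q. q \<in> C \<and> dist (c i) q < \<epsilon>)" for i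
  have p: "p i \<in> C \<and> dist (c i) (p i) < \<epsilon>" if "i \<le> k" for i
  proof (cases "c i \<in> C")
    case False
    have "\<exists>q. q \<in> C \<and> dist (c i) q < \<epsilon>" using near[OF c_\<rho> c(2,3) that] by blast
    from someI_ex[OF this] show ?thesis using False by (simp add: p_def)
  qed (use \<open>\<epsilon> > 0\<close> in \<open>simp add: p_def\<close>)
  have f_close: "dist (f (p i)) (f (c i)) \<le> \<delta>/3" if "i \<le> k" for i
  proof -
    have "p i \<in> S" "c i \<in> S" using p[OF that] CS c(1) that unfolding dchain_def by auto
    moreover have "dist (p i) (c i) < \<epsilon>0" using p[OF that] by (simp add: \<epsilon>_def dist_commute)
    ultimately show ?thesis using \<epsilon>0 by (simp add: less_imp_le)
  qed
  have p_close: "dist (c (Suc i)) (p (Suc i)) \<le> \<delta>/3" if "i < k" for i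
    using p[of "Suc i"] that by (simp add: \<epsilon>_def)
  have "dchain C f (\<delta>/3 + \<rho>' + \<delta>/3) p k"
    by (rule dchain_perturb[OF c(1)]) (use p f_close p_close in auto)
  then have "dchain C f \<delta> p k" by (rule dchain_mono) (simp add: \<rho>'_def)
  moreover have "p 0 = x" "p k = y" using c \<open>x \<in> C\<close> \<open>y \<in> C\<close> by (auto simp: p_def)
  ultimately show "chain_reach C f \<delta> x y" unfolding chain_reach_def by blast
qed

section \<open>Cyclic classes\<close>

lemma cyc_gcd_dvd: "dchain C f \<delta> c k \<Longrightarrow> c 0 = c k \<Longrightarrow> cyc_gcd C f \<delta> dvd k"
  unfolding cyc_gcd_def by (rule Gcd_dvd) blast

lemma sim_delta_refl:
  assumes "chain_transitive C f" "\<delta> > 0" "x \<in> C"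
  shows "sim_delta C f \<delta> x x"
  using assms cyc_gcd_dvd unfolding chain_transitive_def chain_reach_def sim_delta_def by metis

lemma sim_delta_trans:
  assumes "sim_delta C f \<delta> x y" "sim_delta C f \<delta> y z"
  shows "sim_delta C f \<delta> x z"
proof -
  obtain c k where c: "dchain C f \<delta> c k" "c 0 = x" "c k = y" "cyc_gcd C f \<delta> dvd k"
    using assms(1) unfolding sim_delta_def by blast
  obtain d l where d: "dchain C f \<delta> d l" "d 0 = y" "d l = z" "cyc_gcd C f \<delta> dvd l"
    using assms(2) unfolding sim_delta_def by blast
  have "c k = d 0" using c(3) d(2) by simp
  then obtain e where "dchain C f \<delta> e (k + l)" "e 0 = x" "e (k + l) = z"
    using dchain_append[OF c(1) d(1)] c(2) d(3) by auto
  moreover have "cyc_gcd C f \<delta> dvd k + l" using c(4) d(4) by simp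
  ultimately show ?thesis unfolding sim_delta_def by blast
qed

lemma sim_delta_sym:
  assumes "chain_transitive C f" "\<delta> > 0" "sim_delta C f \<delta> x y"
  shows "sim_delta C f \<delta> y x"
proof -
  obtain c k where c: "dchain C f \<delta> c k" "c 0 = x" "c k = y" "cyc_gcd C f \<delta> dvd k"
    using assms(3) unfolding sim_delta_def by blast
  have "x \<in> C" "y \<in> C" using c unfolding dchain_def by auto
  then obtain d l where d: "dchain C f \<delta> d l" "d 0 = y" "d l = x"
    using assms(1,2) unfolding chain_transitive_def chain_reach_def by blast
  have "c k = d 0" using c(3) d(2) by simp
  then obtain e where "dchain C f \<delta> e (k + l)" "e 0 = e (k + l)"
    using dchain_append[OF c(1) d(1)] c(2) d(3) by auto
  then have "cyc_gcd C f \<delta> dvd k + l" by (rule cyc_gcd_dvd)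
  then have "cyc_gcd C f \<delta> dvd l" using c(4) by (simp add: dvd_add_right_iff)
  then show ?thesis unfolding sim_delta_def using d by blast
qed

lemma D_delta_eq:
  assumes "chain_transitive C f" "\<delta> > 0" "x \<in> C" "D \<noteq> {}" "D \<subseteq> {y \<in> C. sim_delta C f \<delta> x y}"
  shows "D_delta C f \<delta> D = {y \<in> C. sim_delta C f \<delta> x y}"
  unfolding D_delta_def
proof (rule the_equality)
  show "{y \<in> C. sim_delta C f \<delta> x y} \<in> Dcl_delta C f \<delta> \<and> D \<subseteq> {y \<in> C. sim_delta C f \<delta> x y}"
    using assms(3,5) unfolding Dcl_delta_def by blast
next
  fix E assume E: "E \<in> Dcl_delta C f \<delta> \<and> D \<subseteq> E"
  then obtain x' where x': "x' \<in> C" "E = {y \<in> C. sim_delta C f \<delta> x' y}"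
    unfolding Dcl_delta_def by blast
  obtain z where "z \<in> D" using assms(4) by blast
  then have "sim_delta C f \<delta> x z" "sim_delta C f \<delta> x' z" using assms(5) E x' by auto
  then have "sim_delta C f \<delta> x x'" "sim_delta C f \<delta> x' x"
    using sim_delta_sym[OF assms(1,2)] sim_delta_trans by blast+
  then show "E = {y \<in> C. sim_delta C f \<delta> x y}" unfolding x'(2) using sim_delta_trans by blast
qed

lemma D_delta_Dcl:
  assumes "chain_transitive C f" "\<delta> > 0" "x \<in> C" "D = {y \<in> C. sim_C C f x y}"
  shows "D_delta C f \<delta> D = {y \<in> C. sim_delta C f \<delta> x y}"
proof (rule D_delta_eq[OF assms(1-3)])
  show "D \<noteq> {}" using assms sim_delta_refl unfolding sim_C_def by blast
  show "D \<subseteq> {y \<in> C. sim_delta C f \<delta> x y}" using assms(2,4) unfolding sim_C_def by blast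
qed

lemma dchain_image:
  assumes "dchain C f \<eta> c k" "h ` C \<subseteq> C'" "f ` C \<subseteq> C" "\<forall>x\<in>C. h (f x) = g (h x)"
    and "\<And>u v. u \<in> C \<Longrightarrow> v \<in> C \<Longrightarrow> dist u v \<le> \<eta> \<Longrightarrow> dist (h u) (h v) \<le> \<epsilon>"
  shows "dchain C' g \<epsilon> (h \<circ> c) k"
  unfolding dchain_def
proof (intro conjI allI impI)
  show "1 \<le> k" using assms(1) unfolding dchain_def by simp
  show "(h \<circ> c) i \<in> C'" if "i \<le> k" for i using assms(1,2) that unfolding dchain_def by auto
next
  fix i assume "i < k"
  then have "c i \<in> C" "c (Suc i) \<in> C" "dist (f (c i)) (c (Suc i)) \<le> \<eta>"
    using assms(1) unfolding dchain_def by auto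
  then have "dist (h (f (c i))) (h (c (Suc i))) \<le> \<epsilon>" using assms(3,5) by blast
  then show "dist (g ((h \<circ> c) i)) ((h \<circ> c) (Suc i)) \<le> \<epsilon>" using assms(4) \<open>c i \<in> C\<close> by simp
qed

lemma sim_delta_image:
  assumes "sim_delta C f \<eta> x y" "h ` C \<subseteq> C'" "f ` C \<subseteq> C" "\<forall>x\<in>C. h (f x) = g (h x)"
    and "\<And>u v. u \<in> C \<Longrightarrow> v \<in> C \<Longrightarrow> dist u v \<le> \<eta> \<Longrightarrow> dist (h u) (h v) \<le> \<epsilon>"
  shows "sim_delta C' g \<epsilon> (h x) (h y)"
proof -
  have "cyc_gcd C' g \<epsilon> dvd cyc_gcd C f \<eta>"
    unfolding cyc_gcd_def[of C f]
  proof (rule Gcd_greatest)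
    fix k assume "k \<in> {k. \<exists>c. dchain C f \<eta> c k \<and> c 0 = c k}"
    then obtain c where "dchain C f \<eta> c k" "c 0 = c k" by blast
    then show "cyc_gcd C' g \<epsilon> dvd k" using cyc_gcd_dvd[OF dchain_image[OF _ assms(2-5)]] by simp
  qed
  moreover obtain c k where "dchain C f \<eta> c k" "c 0 = x" "c k = y" "cyc_gcd C f \<eta> dvd k"
    using assms(1) unfolding sim_delta_def by blast
  ultimately show ?thesis unfolding sim_delta_def
    using dchain_image[OF _ assms(2-5)] dvd_trans by (intro exI[of _ "h \<circ> c"] exI[of _ k]) auto
qed

lemma D_delta_image:
  assumes "chain_transitive C f" "chain_transitive C' g" "uniformly_continuous_on C h"
    and "h ` C \<subseteq> C'" "f ` C \<subseteq> C" "\<forall>x\<in>C. h (f x) = g (h x)" "D \<in> Dcl C f" "\<epsilon> > 0"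
  obtains \<eta> where "\<eta> > 0" "D_delta C f \<eta> D \<noteq> {}" "D_delta C f \<eta> D \<subseteq> C"
    "h ` D_delta C f \<eta> D \<subseteq> D_delta C' g \<epsilon> (h ` D)"
proof -
  obtain x where x: "x \<in> C" "D = {y \<in> C. sim_C C f x y}" using assms(7) unfolding Dcl_def by blast
  obtain d where "d > 0" and d: "\<forall>u\<in>C. \<forall>v\<in>C. dist v u < d \<longrightarrow> dist (h v) (h u) < \<epsilon>"
    using assms(3,8) unfolding uniformly_continuous_on_def by blast
  define \<eta> where "\<eta> = d/2"
  have "\<eta> > 0" using \<open>d > 0\<close> by (simp add: \<eta>_def)
  have h_close: "dist (h u) (h v) \<le> \<epsilon>" if "u \<in> C" "v \<in> C" "dist u v \<le> \<eta>" for u v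
  proof -
    have "dist u v < d" using that(3) \<open>d > 0\<close> by (simp add: \<eta>_def)
    then have "dist (h u) (h v) < \<epsilon>" using d that(1,2) by blast
    then show ?thesis by simp
  qed
  have class_image: "h ` {y \<in> C. sim_delta C f \<eta> x y} \<subseteq> {y \<in> C'. sim_delta C' g \<epsilon> (h x) y}"
    using sim_delta_image[OF _ assms(4-6) h_close] assms(4) by blast
  have D_eq: "D_delta C f \<eta> D = {y \<in> C. sim_delta C f \<eta> x y}"
    using D_delta_Dcl[OF assms(1) \<open>\<eta> > 0\<close> x] .
  have x_class: "x \<in> {y \<in> C. sim_delta C f \<eta> x y}" using sim_delta_refl[OF assms(1) \<open>\<eta> > 0\<close> x(1)] x(1) by blast
  have "D_delta C' g \<epsilon> (h ` D) = {y \<in> C'. sim_delta C' g \<epsilon> (h x) y}"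
  proof (rule D_delta_eq[OF assms(2,8)])
    show "h x \<in> C'" using x(1) assms(4) by blast
    show "h ` D \<noteq> {}" using x sim_delta_refl[OF assms(1)] unfolding sim_C_def by blast
    have "D \<subseteq> {y \<in> C. sim_delta C f \<eta> x y}" using x(2) \<open>\<eta> > 0\<close> unfolding sim_C_def by blast
    then show "h ` D \<subseteq> {y \<in> C'. sim_delta C' g \<epsilon> (h x) y}" using class_image by blast
  qed
  then show ?thesis using that[OF \<open>\<eta> > 0\<close>] D_eq class_image x_class by blast
qed

section \<open>Asymptotic orbits and stable sets\<close>

lemma funpow_closed: "f ` S \<subseteq> S \<Longrightarrow> x \<in> S \<Longrightarrow> (f ^^ i) x \<in> S"
  by (induction i) auto

lemma funpow_conj:
  assumes "f ` C \<subseteq> C" "\<forall>x\<in>C. h (f x) = g (h x)" "x \<in> C"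
  shows "h ((f ^^ i) x) = (g ^^ i) (h x)"
proof (induction i)
  case (Suc i)
  have "(f ^^ i) x \<in> C" using funpow_closed[OF assms(1,3)] .
  then show ?case using Suc assms(2) by simp
qed simp

lemma tendsto_dist_zero_triangle:
  assumes "(\<lambda>i. dist (u i) (v i)) \<longlonglongrightarrow> 0" "(\<lambda>i. dist (v i) (w i)) \<longlonglongrightarrow> 0"
  shows "(\<lambda>i. dist (u i) (w i)) \<longlonglongrightarrow> 0"
proof (rule Lim_null_comparison)
  show "\<forall>\<^sub>F i in sequentially. norm (dist (u i) (w i)) \<le> dist (u i) (v i) + dist (v i) (w i)"
    by (simp add: dist_triangle)
  show "(\<lambda>i. dist (u i) (v i) + dist (v i) (w i)) \<longlonglongrightarrow> 0" using tendsto_add_zero[OF assms] .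
qed

lemma uniformly_continuous_on_tendsto_dist_zero:
  assumes "uniformly_continuous_on S h" "\<forall>i. u i \<in> S" "\<forall>i. v i \<in> S"
    and "(\<lambda>i. dist (u i) (v i)) \<longlonglongrightarrow> 0"
  shows "(\<lambda>i. dist (h (u i)) (h (v i))) \<longlonglongrightarrow> 0"
  unfolding tendsto_iff
proof (intro allI impI)
  fix e :: real assume "e > 0"
  then obtain d where "d > 0" and d: "\<forall>x\<in>S. \<forall>x'\<in>S. dist x' x < d \<longrightarrow> dist (h x') (h x) < e"
    using assms(1) unfolding uniformly_continuous_on_def by blast
  have "\<forall>\<^sub>F i in sequentially. dist (dist (u i) (v i)) 0 < d"
    using assms(4) \<open>d > 0\<close> unfolding tendsto_iff by blast
  then show "\<forall>\<^sub>F i in sequentially. dist (dist (h (u i)) (h (v i))) 0 < e"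
  proof eventually_elim
    case (elim i)
    then have "dist (u i) (v i) < d" by simp
    then have "dist (h (u i)) (h (v i)) < e" using d assms(2,3) by blast
    then show ?case by simp
  qed
qed

lemma tendsto_infdist_zeroI:
  assumes "(\<lambda>i. dist (u i) (w i)) \<longlonglongrightarrow> 0" "\<forall>i. w i \<in> A i"
  shows "(\<lambda>i. infdist (u i) (A i)) \<longlonglongrightarrow> 0"
proof (rule Lim_null_comparison)
  show "\<forall>\<^sub>F i in sequentially. norm (infdist (u i) (A i)) \<le> dist (u i) (w i)"
    using assms(2) by (simp add: infdist_le infdist_nonneg)
qed (rule assms(1))

lemma tendsto_infdist_zeroE:
  assumes "\<forall>i. A i \<noteq> {}" "(\<lambda>i. infdist (u i) (A i)) \<longlonglongrightarrow> 0"
  obtains w where "\<forall>i. w i \<in> A i" "(\<lambda>i. dist (u i) (w i)) \<longlonglongrightarrow> 0"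
proof -
  have "\<exists>a\<in>A i. dist (u i) a < infdist (u i) (A i) + inverse (Suc i)" for i
  proof -
    have "(INF a\<in>A i. dist (u i) a) < infdist (u i) (A i) + inverse (Suc i)"
      using assms(1) by (simp add: infdist_notempty)
    then show ?thesis using assms(1) by (subst (asm) cINF_less_iff) auto
  qed
  then obtain w where w: "\<forall>i. w i \<in> A i" "\<forall>i. dist (u i) (w i) < infdist (u i) (A i) + inverse (Suc i)"
    by metis
  have "(\<lambda>i. dist (u i) (w i)) \<longlonglongrightarrow> 0"
  proof (rule Lim_null_comparison)
    show "\<forall>\<^sub>F i in sequentially. norm (dist (u i) (w i)) \<le> infdist (u i) (A i) + inverse (Suc i)"
      using w(2) by (simp add: less_imp_le)
    show "(\<lambda>i. infdist (u i) (A i) + inverse (Suc i)) \<longlonglongrightarrow> 0"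
      using tendsto_add_zero[OF assms(2) LIMSEQ_inverse_real_of_nat] .
  qed
  then show ?thesis using that w(1) by blast
qed

lemma Ws_asymptotic_pseudo_orbit:
  assumes "x \<in> Ws X f C" "C \<noteq> {}" "C \<subseteq> X" "uniformly_continuous_on X f" "f ` X \<subseteq> X"
  obtains c where "\<forall>i. c i \<in> C" "(\<lambda>i. dist ((f ^^ i) x) (c i)) \<longlonglongrightarrow> 0"
    "(\<lambda>i. dist (f (c i)) (c (Suc i))) \<longlonglongrightarrow> 0"
proof -
  have "x \<in> X" and x_C: "(\<lambda>i. infdist ((f ^^ i) x) C) \<longlonglongrightarrow> 0"
    using assms(1) unfolding Ws_def by auto
  have "\<forall>i. C \<noteq> {}" using assms(2) by blast
  then obtain c where c: "\<forall>i. c i \<in> C" "(\<lambda>i. dist ((f ^^ i) x) (c i)) \<longlonglongrightarrow> 0"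
    by (rule tendsto_infdist_zeroE[OF _ x_C])
  have "(\<lambda>i. dist (f (c i)) (f ((f ^^ i) x))) \<longlonglongrightarrow> 0"
    using c assms(3) funpow_closed[OF assms(5) \<open>x \<in> X\<close>]
    by (intro uniformly_continuous_on_tendsto_dist_zero[OF assms(4)]) (auto simp: dist_commute)
  moreover have "(\<lambda>i. dist (f ((f ^^ i) x)) (c (Suc i))) \<longlonglongrightarrow> 0"
    using LIMSEQ_Suc[OF c(2)] by simp
  ultimately have "(\<lambda>i. dist (f (c i)) (c (Suc i))) \<longlonglongrightarrow> 0"
    by (rule tendsto_dist_zero_triangle)
  then show ?thesis using that c by blast
qed

lemma Vs_image:
  assumes "x \<in> Vs X f C D" "\<forall>i. c i \<in> C" "(\<lambda>i. dist ((f ^^ i) x) (c i)) \<longlonglongrightarrow> 0"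
    and "b \<in> Y" "(\<lambda>i. dist ((g ^^ i) b) (h (c i))) \<longlonglongrightarrow> 0"
    and "chain_transitive C f" "chain_transitive C' g" "uniformly_continuous_on C h"
    and "h ` C \<subseteq> C'" "f ` C \<subseteq> C" "\<forall>x\<in>C. h (f x) = g (h x)" "D \<in> Dcl C f"
  shows "b \<in> Vs Y g C' (h ` D)"
proof -
  have "b \<in> Ws Y g C'"
    unfolding Ws_def using assms(2,4,9) tendsto_infdist_zeroI[OF assms(5), of "\<lambda>i. C'"] by blast
  moreover have "(\<lambda>i. infdist ((g ^^ i) b) ((g ^^ i) ` D_delta C' g \<epsilon> (h ` D))) \<longlonglongrightarrow> 0"
    if "\<epsilon> > 0" for \<epsilon>
  proof -
    obtain \<eta> where \<eta>: "\<eta> > 0" "D_delta C f \<eta> D \<noteq> {}" "D_delta C f \<eta> D \<subseteq> C"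
      "h ` D_delta C f \<eta> D \<subseteq> D_delta C' g \<epsilon> (h ` D)"
      using D_delta_image[OF assms(6-12) \<open>\<epsilon> > 0\<close>] by blast
    have x_D: "(\<lambda>i. infdist ((f ^^ i) x) ((f ^^ i) ` D_delta C f \<eta> D)) \<longlonglongrightarrow> 0"
      using assms(1) \<eta>(1) unfolding Vs_def by blast
    have "\<forall>i. (f ^^ i) ` D_delta C f \<eta> D \<noteq> {}" using \<eta>(2) by blast
    then obtain w where w: "\<forall>i. w i \<in> (f ^^ i) ` D_delta C f \<eta> D"
      "(\<lambda>i. dist ((f ^^ i) x) (w i)) \<longlonglongrightarrow> 0"
      by (rule tendsto_infdist_zeroE[OF _ x_D])
    have w_C: "w i \<in> C" and hw: "h (w i) \<in> (g ^^ i) ` D_delta C' g \<epsilon> (h ` D)" for i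
    proof -
      obtain u where u: "u \<in> D_delta C f \<eta> D" "w i = (f ^^ i) u" using w(1) by blast
      then have "u \<in> C" using \<eta>(3) by blast
      then show "w i \<in> C" using u(2) funpow_closed[OF assms(10)] by simp
      have "h (w i) = (g ^^ i) (h u)" using u(2) funpow_conj[OF assms(10,11) \<open>u \<in> C\<close>] by simp
      then show "h (w i) \<in> (g ^^ i) ` D_delta C' g \<epsilon> (h ` D)" using u(1) \<eta>(4) by blast
    qed
    have "(\<lambda>i. dist (c i) ((f ^^ i) x)) \<longlonglongrightarrow> 0" using assms(3) by (simp add: dist_commute)
    then have "(\<lambda>i. dist (c i) (w i)) \<longlonglongrightarrow> 0" using w(2) by (rule tendsto_dist_zero_triangle)
    then have "(\<lambda>i. dist (h (c i)) (h (w i))) \<longlonglongrightarrow> 0"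
      using uniformly_continuous_on_tendsto_dist_zero[OF assms(8,2)] w_C by blast
    then have "(\<lambda>i. dist ((g ^^ i) b) (h (w i))) \<longlonglongrightarrow> 0"
      by (rule tendsto_dist_zero_triangle[OF assms(5)])
    then show ?thesis by (rule tendsto_infdist_zeroI) (use hw in blast)
  qed
  ultimately show ?thesis unfolding Vs_def by blast
qed

lemma Vs_limit_shadow:
  assumes "compact X" "continuous_on X f" "f ` X \<subseteq> X" "compact Y" "continuous_on Y g"
    and "C \<in> chain_components X f" "D \<in> Dcl C f" "C' \<in> chain_components Y g"
    and "uniformly_continuous_on C h" "h ` C \<subseteq> C'" "\<forall>x\<in>C. h (f x) = g (h x)"
    and "limit_shadowing Y g" "x \<in> Vs X f C D"
  shows "\<exists>c b. (\<forall>i. c i \<in> C) \<and> (\<lambda>i. dist ((f ^^ i) x) (c i)) \<longlonglongrightarrow> 0 \<and>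
    (\<lambda>i. dist ((g ^^ i) b) (h (c i))) \<longlonglongrightarrow> 0 \<and> b \<in> Vs Y g C' (h ` D)"
proof -
  have fC: "f ` C \<subseteq> C" using chain_component_invariant[OF assms(2,3,6)] .
  have "(1::real) \<in> {\<delta>. \<delta> > 0}" by simp
  then have "x \<in> Ws X f C" using assms(13) unfolding Vs_def by blast
  then obtain c where c: "\<forall>i. c i \<in> C" "(\<lambda>i. dist ((f ^^ i) x) (c i)) \<longlonglongrightarrow> 0"
    "(\<lambda>i. dist (f (c i)) (c (Suc i))) \<longlonglongrightarrow> 0"
    by (rule Ws_asymptotic_pseudo_orbit[OF _ chain_component_nonempty[OF assms(6)]
          chain_component_subset[OF assms(6)] compact_uniformly_continuous[OF assms(2,1)] assms(3)])
  have "(\<lambda>i. dist (h (f (c i))) (h (c (Suc i)))) \<longlonglongrightarrow> 0"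
    using c fC by (intro uniformly_continuous_on_tendsto_dist_zero[OF assms(9)]) auto
  then have "(\<lambda>i. dist (g (h (c i))) (h (c (Suc i)))) \<longlonglongrightarrow> 0"
    using c(1) assms(11) by simp
  moreover have "\<forall>i. h (c i) \<in> Y" using c(1) assms(10) chain_component_subset[OF assms(8)] by blast
  ultimately obtain b where b: "b \<in> Y" "(\<lambda>i. dist ((g ^^ i) b) (h (c i))) \<longlonglongrightarrow> 0"
    using assms(12)[unfolded limit_shadowing_def, rule_format, of "\<lambda>i. h (c i)"] by auto
  have "b \<in> Vs Y g C' (h ` D)"
    using Vs_image[OF assms(13) c(1,2) b _ _ assms(9,10) fC assms(11,7)]
      chain_component_chain_transitive[OF assms(1,2,6)] chain_component_chain_transitive[OF assms(4,5,8)]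
    by blast
  then show ?thesis using c b by blast
qed

section \<open>Scrambled tuples\<close>

lemma full_family_eventually_subset:
  assumes "full_family F" "A \<in> F" "\<forall>\<^sub>F i in sequentially. i \<in> A \<longrightarrow> i \<in> B"
  shows "B \<in> F"
proof -
  obtain N where "\<forall>i\<ge>N. i \<in> A \<longrightarrow> i \<in> B" using assms(3) unfolding eventually_sequentially by blast
  then have "{i \<in> A. i \<ge> N} \<subseteq> B" by blast
  moreover have "{i \<in> A. i \<ge> N} \<in> F" using assms(1,2) unfolding full_family_def by blast
  ultimately show ?thesis using assms(1) unfolding full_family_def furstenberg_family_def by blast
qed

lemma eventually_all_dist_le:
  fixes p q :: "nat \<Rightarrow> nat \<Rightarrow> 'a::metric_space"
  assumes "\<forall>j<n. (\<lambda>i. dist (p j i) (q j i)) \<longlonglongrightarrow> 0" "\<epsilon> > 0"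
  shows "\<forall>\<^sub>F i in sequentially. \<forall>j<n. dist (p j i) (q j i) \<le> \<epsilon>"
proof -
  have "\<forall>j\<in>{..<n}. \<forall>\<^sub>F i in sequentially. dist (p j i) (q j i) < \<epsilon>"
    using assms unfolding tendsto_iff by auto
  then have "\<forall>\<^sub>F i in sequentially. \<forall>j\<in>{..<n}. dist (p j i) (q j i) < \<epsilon>"
    by (rule eventually_ball_finite[rotated]) simp
  then show ?thesis by eventually_elim (auto simp: less_imp_le)
qed

lemma pairwise_dist_gt_perturb:
  fixes x y :: "nat \<Rightarrow> 'a::metric_space"
  assumes "\<forall>j<n. dist (x j) (y j) \<le> \<epsilon>" "\<forall>j k. j < k \<and> k < n \<longrightarrow> r < dist (x j) (x k)"
    and "r' + 2 * \<epsilon> \<le> r"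
  shows "\<forall>j k. j < k \<and> k < n \<longrightarrow> r' < dist (y j) (y k)"
proof (intro allI impI)
  fix j k assume jk: "j < k \<and> k < n"
  have "dist (x j) (x k) \<le> dist (x j) (y j) + dist (y j) (y k) + dist (y k) (x k)"
    using dist_triangle[of "x j" "x k" "y k"] dist_triangle[of "x j" "y k" "y j"] by linarith
  moreover have "dist (x j) (y j) \<le> \<epsilon>" "dist (y k) (x k) \<le> \<epsilon>" "r < dist (x j) (x k)"
    using assms jk by (auto simp: dist_commute)
  ultimately show "r' < dist (y j) (y k)" using assms(3) by linarith
qed

lemma pairwise_dist_lt_perturb:
  fixes x y :: "nat \<Rightarrow> 'a::metric_space"
  assumes "\<forall>j<n. dist (x j) (y j) \<le> \<epsilon>" "\<forall>j k. j < k \<and> k < n \<longrightarrow> dist (x j) (x k) < r"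
    and "r + 2 * \<epsilon> \<le> r'"
  shows "\<forall>j k. j < k \<and> k < n \<longrightarrow> dist (y j) (y k) < r'"
proof (intro allI impI)
  fix j k assume jk: "j < k \<and> k < n"
  have "dist (y j) (y k) \<le> dist (y j) (x j) + dist (x j) (x k) + dist (x k) (y k)"
    using dist_triangle[of "y j" "y k" "x k"] dist_triangle[of "y j" "x k" "x j"] by linarith
  moreover have "dist (y j) (x j) \<le> \<epsilon>" "dist (x k) (y k) \<le> \<epsilon>" "dist (x j) (x k) < r"
    using assms jk by (auto simp: dist_commute)
  ultimately show "dist (y j) (y k) < r'" using assms(3) by linarith
qed

lemma homeomorphism_compact_separated:
  assumes "compact C" "homeomorphism C C' h h'" "r > 0"
  obtains d where "d > 0" "\<And>x y. x \<in> C \<Longrightarrow> y \<in> C \<Longrightarrow> r < dist x y \<Longrightarrow> d \<le> dist (h x) (h y)"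
proof -
  have hC: "h ` C = C'" "\<And>x. x \<in> C \<Longrightarrow> h' (h x) = x" "continuous_on C h" "continuous_on C' h'"
    using assms(2) unfolding homeomorphism_def by auto
  then have "uniformly_continuous_on C' h'"
    using compact_uniformly_continuous compact_continuous_image[OF hC(3) assms(1)] by blast
  then obtain d where "d > 0" and d: "\<forall>u\<in>C'. \<forall>v\<in>C'. dist v u < d \<longrightarrow> dist (h' v) (h' u) < r"
    using assms(3) unfolding uniformly_continuous_on_def by blast
  show ?thesis
  proof (rule that[OF \<open>d > 0\<close>])
    fix x y assume xy: "x \<in> C" "y \<in> C" "r < dist x y"
    show "d \<le> dist (h x) (h y)"
    proof (rule ccontr)
      assume "\<not> d \<le> dist (h x) (h y)"
      moreover have "h x \<in> C'" "h y \<in> C'" using hC(1) xy by blast+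
      ultimately have "dist (h' (h x)) (h' (h y)) < r" using d by (simp add: not_le)
      then show False using hC(2) xy by simp
    qed
  qed
qed

lemma S_set_transfer:
  assumes "full_family F" "S_set f n a \<delta> \<in> F" "\<delta> > 0" "compact C" "homeomorphism C C' h h'"
    and "\<forall>j<n. \<forall>i. c j i \<in> C"
    and "\<forall>j<n. (\<lambda>i. dist ((f ^^ i) (a j)) (c j i)) \<longlonglongrightarrow> 0"
    and "\<forall>j<n. (\<lambda>i. dist ((g ^^ i) (b j)) (h (c j i))) \<longlonglongrightarrow> 0"
  obtains \<delta>' where "\<delta>' > 0" "S_set g n b \<delta>' \<in> F"
proof -
  have "\<delta>/2 > 0" using assms(3) by simp
  then obtain d where "d > 0"
    and sep: "\<And>x y. x \<in> C \<Longrightarrow> y \<in> C \<Longrightarrow> \<delta>/2 < dist x y \<Longrightarrow> d \<le> dist (h x) (h y)"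
    using homeomorphism_compact_separated[OF assms(4,5)] by blast
  have "\<forall>j<n. (\<lambda>i. dist (h (c j i)) ((g ^^ i) (b j))) \<longlonglongrightarrow> 0" using assms(8) by (simp add: dist_commute)
  then have "\<forall>\<^sub>F i in sequentially. \<forall>j<n. dist (h (c j i)) ((g ^^ i) (b j)) \<le> d/8"
    by (rule eventually_all_dist_le) (use \<open>d > 0\<close> in simp)
  moreover have "\<forall>\<^sub>F i in sequentially. \<forall>j<n. dist ((f ^^ i) (a j)) (c j i) \<le> \<delta>/4"
    by (rule eventually_all_dist_le[OF assms(7)]) (use assms(3) in simp)
  ultimately have "\<forall>\<^sub>F i in sequentially. i \<in> S_set f n a \<delta> \<longrightarrow> i \<in> S_set g n b (d/4)"
  proof eventually_elim
    case (elim i)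
    show ?case
    proof
      assume a_far: "i \<in> S_set f n a \<delta>"
      have c_far: "\<forall>j k. j < k \<and> k < n \<longrightarrow> \<delta>/2 < dist (c j i) (c k i)"
        by (rule pairwise_dist_gt_perturb[where x="\<lambda>j. (f ^^ i) (a j)" and \<epsilon>="\<delta>/4" and r=\<delta>])
          (use elim a_far in \<open>auto simp: S_set_def\<close>)
      have h_far: "\<forall>j k. j < k \<and> k < n \<longrightarrow> d/2 < dist (h (c j i)) (h (c k i))"
      proof (intro allI impI)
        fix j k assume jk: "j < k \<and> k < n"
        then have "c j i \<in> C" "c k i \<in> C" using assms(6) by auto
        then have "d \<le> dist (h (c j i)) (h (c k i))" using sep c_far jk by blast
        then show "d/2 < dist (h (c j i)) (h (c k i))" using \<open>d > 0\<close> by linarith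
      qed
      show "i \<in> S_set g n b (d/4)" unfolding S_set_def mem_Collect_eq
        by (rule pairwise_dist_gt_perturb[where x="\<lambda>j. h (c j i)" and \<epsilon>="d/8" and r="d/2"])
          (use elim h_far in auto)
    qed
  qed
  then have "S_set g n b (d/4) \<in> F" by (rule full_family_eventually_subset[OF assms(1,2)])
  then show ?thesis using that[of "d/4"] \<open>d > 0\<close> by simp
qed

lemma T_set_transfer:
  assumes "full_family G" "\<forall>\<epsilon>>0. T_set f n a \<epsilon> \<in> G" "uniformly_continuous_on C h"
    and "\<forall>j<n. \<forall>i. c j i \<in> C"
    and "\<forall>j<n. (\<lambda>i. dist ((f ^^ i) (a j)) (c j i)) \<longlonglongrightarrow> 0"
    and "\<forall>j<n. (\<lambda>i. dist ((g ^^ i) (b j)) (h (c j i))) \<longlonglongrightarrow> 0"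
    and "\<epsilon> > 0"
  shows "T_set g n b \<epsilon> \<in> G"
proof -
  have "\<epsilon>/3 > 0" using assms(7) by simp
  then obtain \<eta> where "\<eta> > 0" and \<eta>: "\<forall>x\<in>C. \<forall>y\<in>C. dist y x < \<eta> \<longrightarrow> dist (h y) (h x) < \<epsilon>/3"
    using assms(3) unfolding uniformly_continuous_on_def by blast
  define e where "e = min (\<eta>/3) (\<epsilon>/3)"
  have "e > 0" using \<open>\<eta> > 0\<close> assms(7) by (simp add: e_def)
  have "\<forall>j<n. (\<lambda>i. dist (h (c j i)) ((g ^^ i) (b j))) \<longlonglongrightarrow> 0" using assms(6) by (simp add: dist_commute)
  then have "\<forall>\<^sub>F i in sequentially. \<forall>j<n. dist (h (c j i)) ((g ^^ i) (b j)) \<le> e"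
    using \<open>e > 0\<close> by (rule eventually_all_dist_le)
  moreover have "\<forall>\<^sub>F i in sequentially. \<forall>j<n. dist ((f ^^ i) (a j)) (c j i) \<le> e"
    using assms(5) \<open>e > 0\<close> by (rule eventually_all_dist_le)
  ultimately have "\<forall>\<^sub>F i in sequentially. i \<in> T_set f n a (\<eta>/3) \<longrightarrow> i \<in> T_set g n b \<epsilon>"
  proof eventually_elim
    case (elim i)
    show ?case
    proof
      assume a_near: "i \<in> T_set f n a (\<eta>/3)"
      have c_near: "\<forall>j k. j < k \<and> k < n \<longrightarrow> dist (c j i) (c k i) < \<eta>"
        by (rule pairwise_dist_lt_perturb[where x="\<lambda>j. (f ^^ i) (a j)" and \<epsilon>=e and r="\<eta>/3"])
          (use elim a_near in \<open>auto simp: T_set_def e_def\<close>)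
      have h_near: "\<forall>j k. j < k \<and> k < n \<longrightarrow> dist (h (c j i)) (h (c k i)) < \<epsilon>/3"
      proof (intro allI impI)
        fix j k assume jk: "j < k \<and> k < n"
        then have "c j i \<in> C" "c k i \<in> C" using assms(4) by auto
        then show "dist (h (c j i)) (h (c k i)) < \<epsilon>/3" using \<eta> c_near jk by blast
      qed
      show "i \<in> T_set g n b \<epsilon>" unfolding T_set_def mem_Collect_eq
        by (rule pairwise_dist_lt_perturb[where x="\<lambda>j. h (c j i)" and \<epsilon>=e and r="\<epsilon>/3"])
          (use elim h_near in \<open>auto simp: e_def\<close>)
    qed
  qed
  moreover have "T_set f n a (\<eta>/3) \<in> G" using assms(2) \<open>\<eta> > 0\<close> by simp
  ultimately show ?thesis using full_family_eventually_subset[OF assms(1)] by blast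
qed

theorem theorem1p3:
  fixes X :: "'a::metric_space set" and Y :: "'b::metric_space set"
    and f :: "'a \<Rightarrow> 'a" and g :: "'b \<Rightarrow> 'b"
    and C D :: "'a set" and C' :: "'b set" and h :: "'a \<Rightarrow> 'b"
    and F G :: "nat set set" and n :: nat and \<delta> :: real and a :: "nat \<Rightarrow> 'a"
  assumes "compact X" "continuous_on X f" "f ` X \<subseteq> X"
    and "compact Y" "continuous_on Y g" "g ` Y \<subseteq> Y"
    and "C \<in> chain_components X f" "D \<in> Dcl C f" "C' \<in> chain_components Y g"
    and "\<exists>h'. homeomorphism C C' h h'"
    and "\<forall>x\<in>C. h (f x) = g (h x)"
    and "full_family F" "full_family G"
    and "n \<ge> 2" "\<delta> > 0"
    and "limit_shadowing Y g"
    and "\<forall>j<n. a j \<in> Vs X f C D"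
    and "scrambled f F G \<delta> n a"
  shows "\<exists>\<delta>'>0. \<exists>b. (\<forall>j<n. b j \<in> Vs Y g C' (h ` D)) \<and> scrambled g F G \<delta>' n b"
proof -
  obtain h' where hom: "homeomorphism C C' h h'" using assms(10) by blast
  have "compact C" using compact_chain_component[OF assms(1,2,7)] .
  moreover have "continuous_on C h" and hC: "h ` C \<subseteq> C'" using hom unfolding homeomorphism_def by auto
  ultimately have h_uc: "uniformly_continuous_on C h" by (simp add: compact_uniformly_continuous)
  have "\<forall>j<n. \<exists>c b. (\<forall>i. c i \<in> C) \<and> (\<lambda>i. dist ((f ^^ i) (a j)) (c i)) \<longlonglongrightarrow> 0 \<and>
      (\<lambda>i. dist ((g ^^ i) b) (h (c i))) \<longlonglongrightarrow> 0 \<and> b \<in> Vs Y g C' (h ` D)"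
    using Vs_limit_shadow[OF assms(1-5,7-9) h_uc hC assms(11,16)] assms(17) by blast
  then have "\<exists>c b. \<forall>j<n. (\<forall>i. c j i \<in> C) \<and> (\<lambda>i. dist ((f ^^ i) (a j)) (c j i)) \<longlonglongrightarrow> 0 \<and>
      (\<lambda>i. dist ((g ^^ i) (b j)) (h (c j i))) \<longlonglongrightarrow> 0 \<and> b j \<in> Vs Y g C' (h ` D)"
    by (simp only: choice_iff')
  then obtain c b where c: "\<forall>j<n. \<forall>i. c j i \<in> C" "\<forall>j<n. (\<lambda>i. dist ((f ^^ i) (a j)) (c j i)) \<longlonglongrightarrow> 0"
    and b: "\<forall>j<n. (\<lambda>i. dist ((g ^^ i) (b j)) (h (c j i))) \<longlonglongrightarrow> 0" "\<forall>j<n. b j \<in> Vs Y g C' (h ` D)"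
    by blast
  have S: "S_set f n a \<delta> \<in> F" and T: "\<forall>\<epsilon>>0. T_set f n a \<epsilon> \<in> G"
    using assms(18) unfolding scrambled_def by auto
  obtain \<delta>' where "\<delta>' > 0" "S_set g n b \<delta>' \<in> F"
    by (rule S_set_transfer[OF assms(12) S assms(15) \<open>compact C\<close> hom c b(1)])
  moreover have "\<forall>\<epsilon>>0. T_set g n b \<epsilon> \<in> G"
    using T_set_transfer[OF assms(13) T h_uc c b(1)] by blast
  ultimately show ?thesis using b(2) unfolding scrambled_def by blast
qed

end
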